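(* In the public project problem with equal participation costs, the BC mechanism coincides with the VCG mechanism; equivalently, $S_i^{BCGC}(\theta_{-i})=0$ for all $i$ and all $\theta_{-i}$, where $S_i^{BCGC}(\theta_{-i})=\max_{\theta_i'\in[0,c]}\sum_{k=1}^n t_k^{VCG}(\theta_i',\theta_{-i})$.
   Context: Public project problem (equal participation costs): $n\ge2$ players, decisions $D=\{0,1\}$ (project cancelled/built), $\Theta_i=[0,c]$ with $c>0$, $v_i(d,\theta_i)=d(\theta_i-c/n)$. The efficient decision is $f(\theta)=1$ iff $\sum_i\theta_i\ge c$. Player $i$'s utility is $v_i(f(\theta),\theta_i)+t_i(\theta)$. The VCG (Clarke) mechanism has $t_i^{VCG}(\theta)=\sum_{j\ne i}v_j(f(\theta),\theta_j)-\max_{d\in D}\sum_{j\ne i}v_j(d,\theta_j)$. The BC (Bailey–Cavallo) mechanism is $t_i^{BC}(\theta)=t_i^{VCG}(\theta)-S_i^{BCGC}(\theta_{-i})/n$ with $S_i^{BCGC}(\theta_{-i})=\max_{\theta_i'\in\Theta_i}\sum_{k=1}^n t^{VCG}_k(\theta_i',\theta_{-i})$. *)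

theory Defs
  imports "HOL-Analysis.Analysis"
begin

text \<open>Players are 0,...,n-1;
  a type profile is a function theta :: nat => real (only values at indices < n matter).
  Decisions: 0 (cancelled) or 1 (built).\<close>

definition decisions :: "nat set" where
  "decisions = {0, 1}"

definition pp_v :: "nat \<Rightarrow> real \<Rightarrow> nat \<Rightarrow> real \<Rightarrow> real" where
  "pp_v n c d th = real d * (th - c / real n)"

definition pp_f :: "nat \<Rightarrow> real \<Rightarrow> (nat \<Rightarrow> real) \<Rightarrow> nat" where
  "pp_f n c theta = (if (\<Sum>i<n. theta i) \<ge> c then 1 else 0)"

definition t_VCG :: "nat \<Rightarrow> real \<Rightarrow> nat \<Rightarrow> (nat \<Rightarrow> real) \<Rightarrow> real" where
  "t_VCG n c i theta =
     (\<Sum>j\<in>{..<n} - {i}. pp_v n c (pp_f n c theta) (theta j))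
     - Max ((\<lambda>d. \<Sum>j\<in>{..<n} - {i}. pp_v n c d (theta j)) ` decisions)"

text \<open>S_i^{BCGC}(theta_{-i}) = max over theta_i' in [0,c] of the total VCG transfer at
  (theta_i', theta_{-i}). The value theta i of the argument profile is ignored.\<close>
definition S_BCGC :: "nat \<Rightarrow> real \<Rightarrow> nat \<Rightarrow> (nat \<Rightarrow> real) \<Rightarrow> real" where
  "S_BCGC n c i theta =
     (SUP th' \<in> {0..c}. \<Sum>k<n. t_VCG n c k (theta(i := th')))"

definition t_BC :: "nat \<Rightarrow> real \<Rightarrow> nat \<Rightarrow> (nat \<Rightarrow> real) \<Rightarrow> real" where
  "t_BC n c i theta = t_VCG n c i theta - S_BCGC n c i theta / real n"

end

theory Submission
  imports Defs
begin

(* In the public project problem with equal participation costs c/n, the Clarke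
   transfer of player k depends only on the decision and on the net value the
   other players attach to the project,
     W_k = (sum of the others' types) - (n-1) c / n,
   namely t_k = f W_k - max 0 W_k.  Hence every VCG transfer is nonpositive, and
   it vanishes exactly when player k is not pivotal (the project is built and
   W_k >= 0, or it is cancelled and W_k <= 0).
   The key observation: for any reports theta_{-i} of the others, player i can
   choose a report in [0,c] that makes nobody pivotal -- report c if the others
   already cover (n-1)c/n, and report 0 otherwise.  So the maximum of the total
   VCG transfer over theta_i' is attained and equals 0, i.e. S_i^BCGC = 0, and
   the Bailey--Cavallo redistribution coincides with VCG. *)

definition others_surplus :: "nat \<Rightarrow> real \<Rightarrow> nat \<Rightarrow> (nat \<Rightarrow> real) \<Rightarrow> real" where
  "others_surplus n c k theta = (\<Sum>j\<in>{..<n} - {k}. theta j) - real (n - 1) * c / real n"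

lemma sum_others_pp_v:
  assumes "k < n"
  shows "(\<Sum>j\<in>{..<n} - {k}. pp_v n c d (theta j)) = real d * others_surplus n c k theta"
proof -
  have "card ({..<n} - {k}) = n - 1" using assms by simp
  then show ?thesis
    unfolding pp_v_def others_surplus_def
    by (simp add: sum_distrib_left[symmetric] sum_subtractf algebra_simps)
qed

lemma t_VCG_closed_form:
  assumes "k < n"
  shows "t_VCG n c k theta =
           real (pp_f n c theta) * others_surplus n c k theta - max 0 (others_surplus n c k theta)"
  unfolding t_VCG_def decisions_def sum_others_pp_v[OF assms] by (simp add: max_def)

lemma t_VCG_nonpos:
  assumes "k < n"
  shows "t_VCG n c k theta \<le> 0"
  unfolding t_VCG_closed_form[OF assms] pp_f_def by auto

lemma t_VCG_zero_if_not_pivotal: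
  assumes "k < n"
    and "pp_f n c theta = 1 \<and> others_surplus n c k theta \<ge> 0
         \<or> pp_f n c theta = 0 \<and> others_surplus n c k theta \<le> 0"
  shows "t_VCG n c k theta = 0"
  using assms(2) unfolding t_VCG_closed_form[OF assms(1)] by auto

lemma sum_fun_upd_others:
  fixes theta :: "nat \<Rightarrow> real"
  assumes "i < n"
  shows "(\<Sum>j<n. (theta(i := x)) j) = (\<Sum>j\<in>{..<n} - {i}. theta j) + x"
proof -
  have "(\<Sum>j<n. (theta(i := x)) j) = (theta(i := x)) i + (\<Sum>j\<in>{..<n} - {i}. (theta(i := x)) j)"
    using assms by (simp add: sum.remove)
  also have "(\<Sum>j\<in>{..<n} - {i}. (theta(i := x)) j) = (\<Sum>j\<in>{..<n} - {i}. theta j)"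
    by (rule sum.cong) auto
  finally show ?thesis by simp
qed

lemma others_surplus_fun_upd:
  assumes "k < n" "i < n"
  shows "others_surplus n c k (theta(i := x)) =
           (\<Sum>j\<in>{..<n} - {i}. theta j) + x - (theta(i := x)) k - real (n - 1) * c / real n"
  using assms sum_fun_upd_others[OF assms(2), of theta x]
  by (simp add: others_surplus_def sum_diff1)

text \<open>Player \<open>i\<close> can always report a type in \<open>[0,c]\<close> that makes nobody pivotal:
  \<open>c\<close> if the others already cover their share \<open>(n-1)c/n\<close>, otherwise \<open>0\<close>.\<close>
lemma exists_report_without_transfers:
  assumes "i < n" and "c > 0"
    and others: "\<forall>j<n. j \<noteq> i \<longrightarrow> theta j \<in> {0..c}"
  obtains x where "x \<in> {0..c}" and "\<And>k. k < n \<Longrightarrow> t_VCG n c k (theta(i := x)) = 0"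
proof -
  define R where "R = (\<Sum>j\<in>{..<n} - {i}. theta j)"
  define B where "B = real (n - 1) * c / real n"
  have B_less: "B < c" using assms by (simp add: B_def field_simps of_nat_diff)
  have R_nonneg: "R \<ge> 0" unfolding R_def using others by (intro sum_nonneg) auto
  have total: "(\<Sum>j<n. (theta(i := x)) j) = R + x" for x
    unfolding R_def using sum_fun_upd_others[OF assms(1)] .
  have surplus: "others_surplus n c k (theta(i := x)) = R + x - (theta(i := x)) k - B"
    if "k < n" for k x
    unfolding R_def B_def using others_surplus_fun_upd[OF that assms(1)] .
  show ?thesis
  proof (cases "R \<ge> B")
    case True
    have built: "pp_f n c (theta(i := c)) = 1" unfolding pp_f_def total using R_nonneg by simp
    show ?thesis
    proof (rule that[of c])
      fix k assume k: "k < n"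
      have "others_surplus n c k (theta(i := c)) \<ge> 0"
        using True others k unfolding surplus[OF k] by (cases "k = i") auto
      then show "t_VCG n c k (theta(i := c)) = 0"
        using built by (intro t_VCG_zero_if_not_pivotal k) simp
    qed (use assms in auto)
  next
    case False
    have cancelled: "pp_f n c (theta(i := 0)) = 0"
      unfolding pp_f_def total using False B_less by simp
    show ?thesis
    proof (rule that[of 0])
      fix k assume k: "k < n"
      have "others_surplus n c k (theta(i := 0)) \<le> 0"
        using False others k unfolding surplus[OF k] by (cases "k = i") auto
      then show "t_VCG n c k (theta(i := 0)) = 0"
        using cancelled by (intro t_VCG_zero_if_not_pivotal k) simp
    qed (use assms in auto)
  qed
qed

lemma S_BCGC_attained_zero:
  assumes "i < n" and "c > 0"
    and "\<forall>j<n. j \<noteq> i \<longrightarrow> theta j \<in> {0..c}"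
  shows "\<exists>th'\<in>{0..c}. (\<Sum>k<n. t_VCG n c k (theta(i := th'))) = S_BCGC n c i theta"
    and "S_BCGC n c i theta = 0"
proof -
  obtain x where x: "x \<in> {0..c}" and zero: "\<And>k. k < n \<Longrightarrow> t_VCG n c k (theta(i := x)) = 0"
    using exists_report_without_transfers[OF assms] by blast
  have total_x: "(\<Sum>k<n. t_VCG n c k (theta(i := x))) = 0" using zero by simp
  show S: "S_BCGC n c i theta = 0"
    unfolding S_BCGC_def
  proof (rule cSup_eq_maximum)
    show "0 \<in> (\<lambda>th'. \<Sum>k<n. t_VCG n c k (theta(i := th'))) ` {0..c}"
      using x total_x by (intro image_eqI[of _ _ x]) auto
  next
    fix y assume "y \<in> (\<lambda>th'. \<Sum>k<n. t_VCG n c k (theta(i := th'))) ` {0..c}"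
    then show "y \<le> 0" by (auto intro!: sum_nonpos t_VCG_nonpos)
  qed
  show "\<exists>th'\<in>{0..c}. (\<Sum>k<n. t_VCG n c k (theta(i := th'))) = S_BCGC n c i theta"
    using x total_x S by auto
qed

theorem mainTheorem8:
  fixes n :: nat and c :: real
  assumes "n \<ge> 2" and "c > 0"
  shows "(\<forall>i<n. \<forall>theta. (\<forall>j<n. j \<noteq> i \<longrightarrow> theta j \<in> {0..c}) \<longrightarrow>
            (\<exists>th'\<in>{0..c}. (\<Sum>k<n. t_VCG n c k (theta(i := th'))) = S_BCGC n c i theta)
            \<and> S_BCGC n c i theta = 0)
       \<and> (\<forall>i<n. \<forall>theta. (\<forall>j<n. theta j \<in> {0..c}) \<longrightarrow> t_BC n c i theta = t_VCG n c i theta)"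
proof (intro conjI allI impI)
  fix i theta assume "i < n" "\<forall>j<n. j \<noteq> i \<longrightarrow> theta j \<in> {0..c}"
  then show "\<exists>th'\<in>{0..c}. (\<Sum>k<n. t_VCG n c k (theta(i := th'))) = S_BCGC n c i theta"
    and "S_BCGC n c i theta = 0"
    using S_BCGC_attained_zero assms(2) by blast+
next
  fix i theta assume "i < n" "\<forall>j<n. theta j \<in> {0..c}"
  then have "S_BCGC n c i theta = 0" using S_BCGC_attained_zero(2) assms(2) by blast
  then show "t_BC n c i theta = t_VCG n c i theta" unfolding t_BC_def by simp
qed

end
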